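(* Let $\tilde A\in\mathbb{R}^{m\times s}$ have full column rank, $W=\tilde A^\top\tilde A$, $\tilde\lambda>0$, and $r\in\mathbb{R}^s$. Let $u^*=W^{-1}r$, $v^*=(W+\tilde\lambda I)^{-1}r$ and $z^*=\frac1{\tilde\lambda}(u^*-v^* )$ (so that $z^*=(W^2+\tilde\lambda W)^{-1}r$). Suppose $\hat u,\hat v\in\mathbb{R}^s$ satisfy $\|\hat u-u^*\|_W\le\epsilon_{2,1}\|u^*\|_W$ and $\|\hat v-v^*\|_{W+\tilde\lambda I}\le\epsilon_{2,2}\|v^*\|_{W+\tilde\lambda I}$, and let $\hat z=\frac1{\tilde\lambda}(\hat u-\hat v)$. Then $$\|\hat z-z^*\|_{W^2+\tilde\lambda W}\le\frac{1}{\tilde\lambda}\Big(\epsilon_{2,1}\|\tilde A\tilde A^\top+\tilde\lambda I\|+\epsilon_{2,2}\|\tilde A\tilde A^\top\|\Big)\|z^*\|_{W^2+\tilde\lambda W}.$$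
   Context: For positive (semi)definite $B$, $\|x\|_B=\sqrt{x^\top Bx}$; $\|\cdot\|$ on matrices is the spectral norm. *)

theory Defs
  imports "HOL-Analysis.Analysis"
begin

definition wnorm :: "real^'n^'n \<Rightarrow> real^'n \<Rightarrow> real" where
  "wnorm B x = sqrt (x \<bullet> (B *v x))"

definition spec_norm :: "real^'n^'m \<Rightarrow> real" where
  "spec_norm A = onorm (\<lambda>x. A *v x)"

end

theory Submission
  imports Defs
begin

text \<open>Put \<open>P = A A\<^sup>T + lam I\<close>. The key identity is \<open>\<parallel>x\<parallel>\<^bsub>W\<^sup>2 + lam W\<^esub> = \<parallel>A x\<parallel>\<^bsub>P\<^esub>\<close>,
  so \<open>zhat - zstar\<close> is measured through \<open>A (uhat - ustar)\<close> and \<open>A (vhat - vstar)\<close> in the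
  \<open>P\<close>-seminorm, which satisfies the triangle inequality. From \<open>ustar = (W + lam I) zstar\<close> one
  gets \<open>A ustar = P (A zstar)\<close>, and Cauchy-Schwarz for \<open>P\<close> gives \<open>\<parallel>P y\<parallel>\<^sup>2 \<le> \<parallel>P\<parallel> y\<^sup>T P y\<close>;
  so passing from \<open>\<parallel>_\<parallel>\<^bsub>W\<^esub>\<close> to \<open>\<parallel>A _\<parallel>\<^bsub>P\<^esub>\<close> costs a factor \<open>\<parallel>P\<parallel>\<^sup>1\<^sup>/\<^sup>2\<close>, once for the
  error and once for \<open>ustar\<close> against \<open>zstar\<close>. Likewise \<open>vstar = A\<^sup>T (A zstar)\<close>, and exchanging
  \<open>A\<^sup>T A + lam I\<close> with \<open>A A\<^sup>T + lam I\<close> costs a factor \<open>\<parallel>A A\<^sup>T\<parallel>\<^sup>1\<^sup>/\<^sup>2\<close> in either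
  direction.\<close>

definition psd :: "real^'n^'n \<Rightarrow> bool" where
  "psd P \<longleftrightarrow> transpose P = P \<and> (\<forall>x. 0 \<le> x \<bullet> (P *v x))"

lemma inner_matrix_vector_transpose:
  fixes A :: "real^'n^'m"
  shows "(A *v x) \<bullet> y = x \<bullet> (transpose A *v y)"
  by (metis dot_lmul_matrix inner_commute transpose_matrix_vector)

lemma matrix_vector_mult_shift:
  fixes B :: "real^'n^'n"
  shows "(B + c *\<^sub>R mat 1) *v x = B *v x + c *\<^sub>R x"
  by (simp add: matrix_vector_mult_add_rdistrib scaleR_matrix_vector_assoc[symmetric])

lemma inner_gram:
  fixes B :: "real^'n^'m"
  shows "x \<bullet> ((transpose B ** B) *v x) = (norm (B *v x))\<^sup>2"
proof -
  have "x \<bullet> (transpose B *v (B *v x)) = (B *v x) \<bullet> (B *v x)"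
    by (rule inner_matrix_vector_transpose[symmetric])
  then show ?thesis
    by (simp only: matrix_vector_mul_assoc power2_norm_eq_inner)
qed

lemma inner_gram_shift:
  fixes B :: "real^'n^'m"
  shows "x \<bullet> ((transpose B ** B + c *\<^sub>R mat 1) *v x) = (norm (B *v x))\<^sup>2 + c * (norm x)\<^sup>2"
  by (simp add: matrix_vector_mult_shift inner_add_right inner_gram power2_norm_eq_inner)

lemma wnorm_gram: "wnorm (transpose B ** B) x = norm (B *v x)"
  by (simp add: wnorm_def inner_gram)

lemma wnorm_gram_shift:
  "wnorm (transpose B ** B + c *\<^sub>R mat 1) x = sqrt ((norm (B *v x))\<^sup>2 + c * (norm x)\<^sup>2)"
  by (simp add: wnorm_def inner_gram_shift)

lemma transpose_add: "transpose (A + B) = transpose A + transpose B"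
  by (simp add: transpose_def vec_eq_iff)

lemma psd_gram_shift:
  fixes B :: "real^'n^'m"
  assumes "0 \<le> c"
  shows "psd (transpose B ** B + c *\<^sub>R mat 1)"
  using assms by (simp add: psd_def inner_gram_shift matrix_transpose_mul transpose_add
      transpose_scalar transpose_mat)

lemma wnorm_scaleR: "wnorm P (c *\<^sub>R x) = \<bar>c\<bar> * wnorm P x"
proof -
  have "(c *\<^sub>R x) \<bullet> (P *v (c *\<^sub>R x)) = c\<^sup>2 * (x \<bullet> (P *v x))"
    by (simp add: matrix_vector_mult_scaleR power2_eq_square)
  then show ?thesis
    by (simp add: wnorm_def real_sqrt_mult)
qed

lemma psd_wnorm_nonneg: "psd P \<Longrightarrow> 0 \<le> wnorm P x"
  by (simp add: psd_def wnorm_def)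

lemma psd_inner_commute: "psd P \<Longrightarrow> y \<bullet> (P *v x) = x \<bullet> (P *v y)"
  using inner_matrix_vector_transpose[of P x y] by (simp add: psd_def inner_commute)

lemma quadratic_nonneg_discriminant:
  fixes a b c :: real
  assumes "0 \<le> a" and nonneg: "\<And>t. 0 \<le> a * t\<^sup>2 + 2 * b * t + c"
  shows "b\<^sup>2 \<le> a * c"
proof (cases "a = 0")
  case True
  have "b = 0"
  proof (rule ccontr)
    assume "b \<noteq> 0"
    then have "a * (- (c + 1) / (2 * b))\<^sup>2 + 2 * b * (- (c + 1) / (2 * b)) + c = -1"
      using True by (simp add: field_simps)
    with nonneg show False by (metis neg_0_le_iff_le not_one_le_zero)
  qed
  then show ?thesis using True by simp
next
  case False
  with \<open>0 \<le> a\<close> have "0 < a" by simp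
  have "0 \<le> a * (- b / a)\<^sup>2 + 2 * b * (- b / a) + c" by (rule nonneg)
  also have "\<dots> = (a * c - b\<^sup>2) / a"
    using \<open>0 < a\<close> by (simp add: field_simps power2_eq_square)
  finally show ?thesis
    using \<open>0 < a\<close> by (simp add: zero_le_divide_iff)
qed

lemma psd_cauchy_schwarz:
  assumes "psd P"
  shows "(x \<bullet> (P *v y))\<^sup>2 \<le> (x \<bullet> (P *v x)) * (y \<bullet> (P *v y))"
proof -
  have sym: "y \<bullet> (P *v x) = x \<bullet> (P *v y)"
    using assms by (rule psd_inner_commute)
  show ?thesis
  proof (rule quadratic_nonneg_discriminant)
    show "0 \<le> x \<bullet> (P *v x)" using assms by (simp add: psd_def)
    fix t
    have "0 \<le> (t *\<^sub>R x + y) \<bullet> (P *v (t *\<^sub>R x + y))"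
      using assms by (simp add: psd_def)
    also have "\<dots> = (x \<bullet> (P *v x)) * t\<^sup>2 + 2 * (x \<bullet> (P *v y)) * t + y \<bullet> (P *v y)"
      by (simp add: matrix_vector_right_distrib matrix_vector_mult_scaleR inner_add_left
          inner_add_right sym algebra_simps power2_eq_square)
    finally show "0 \<le> (x \<bullet> (P *v x)) * t\<^sup>2 + 2 * (x \<bullet> (P *v y)) * t + y \<bullet> (P *v y)" .
  qed
qed

lemma wnorm_triangle:
  assumes "psd P"
  shows "wnorm P (x + y) \<le> wnorm P x + wnorm P y"
proof -
  have qx: "0 \<le> x \<bullet> (P *v x)" and qy: "0 \<le> y \<bullet> (P *v y)"
    using assms by (simp_all add: psd_def)
  have sym: "y \<bullet> (P *v x) = x \<bullet> (P *v y)"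
    using assms by (rule psd_inner_commute)
  have "x \<bullet> (P *v y) \<le> sqrt ((x \<bullet> (P *v x)) * (y \<bullet> (P *v y)))"
    using psd_cauchy_schwarz[OF assms] by (simp add: real_le_rsqrt)
  then have "(x + y) \<bullet> (P *v (x + y)) \<le> (wnorm P x + wnorm P y)\<^sup>2"
    using qx qy by (simp add: wnorm_def matrix_vector_right_distrib inner_add_left
        inner_add_right sym power2_sum real_sqrt_mult)
  then show ?thesis
    using qx qy unfolding wnorm_def by (simp add: real_sqrt_le_iff real_le_lsqrt)
qed

lemma wnorm_diff_le:
  assumes "psd P"
  shows "wnorm P (x - y) \<le> wnorm P x + wnorm P y"
  using wnorm_triangle[OF assms, of x "(-1) *\<^sub>R y"] wnorm_scaleR[of P "-1" y] by simp

lemma norm_matrix_vector_le_spec_norm: "norm (A *v x) \<le> spec_norm A * norm x"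
  unfolding spec_norm_def by (rule onorm) simp

lemma spec_norm_nonneg: "0 \<le> spec_norm A"
  unfolding spec_norm_def by (rule onorm_pos_le) simp

lemma inner_le_spec_norm: "x \<bullet> (P *v x) \<le> spec_norm P * (norm x)\<^sup>2"
proof -
  have "x \<bullet> (P *v x) \<le> norm x * norm (P *v x)" by (rule norm_cauchy_schwarz)
  also have "\<dots> \<le> norm x * (spec_norm P * norm x)"
    by (simp add: mult_left_mono norm_matrix_vector_le_spec_norm)
  finally show ?thesis by (simp add: power2_eq_square algebra_simps)
qed

lemma wnorm_le_spec_norm: "wnorm P x \<le> sqrt (spec_norm P) * norm x"
  unfolding wnorm_def
  by (metis inner_le_spec_norm real_sqrt_le_mono real_sqrt_mult real_sqrt_abs abs_norm_cancel)

lemma psd_norm_matrix_vector_le: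
  assumes "psd P"
  shows "norm (P *v x) \<le> sqrt (spec_norm P) * wnorm P x"
proof -
  define y where "y = P *v x"
  have "(norm y)\<^sup>2 = x \<bullet> (P *v y)"
    using assms inner_matrix_vector_transpose[of P x y]
    by (simp add: psd_def y_def power2_norm_eq_inner)
  then have "((norm y)\<^sup>2)\<^sup>2 \<le> (x \<bullet> (P *v x)) * (y \<bullet> (P *v y))"
    using psd_cauchy_schwarz[OF assms] by simp
  also have "\<dots> \<le> (x \<bullet> (P *v x)) * (spec_norm P * (norm y)\<^sup>2)"
    using assms by (simp add: psd_def mult_left_mono inner_le_spec_norm)
  finally have "(norm y)\<^sup>2 \<le> spec_norm P * (wnorm P x)\<^sup>2"
    using assms spec_norm_nonneg[of P]
    by (cases "y = 0") (auto simp: psd_def wnorm_def power2_eq_square algebra_simps)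
  then show ?thesis
    unfolding y_def
    by (metis real_le_rsqrt real_sqrt_mult real_sqrt_abs psd_wnorm_nonneg[OF assms] abs_of_nonneg)
qed

lemma norm_transpose_matrix_vector_le:
  fixes A :: "real^'n^'m"
  shows "norm (transpose A *v y) \<le> sqrt (spec_norm (A ** transpose A)) * norm y"
  using wnorm_le_spec_norm[of "A ** transpose A" y] wnorm_gram[of "transpose A" y] by simp

lemma norm_matrix_vector_le_sqrt_spec_norm:
  fixes A :: "real^'n^'m"
  shows "norm (A *v x) \<le> sqrt (spec_norm (A ** transpose A)) * norm x"
proof -
  let ?c = "sqrt (spec_norm (A ** transpose A))"
  have "(norm (A *v x))\<^sup>2 = x \<bullet> (transpose A *v (A *v x))"
    by (simp add: power2_norm_eq_inner inner_matrix_vector_transpose)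
  also have "\<dots> \<le> norm x * norm (transpose A *v (A *v x))"
    by (rule norm_cauchy_schwarz)
  also have "\<dots> \<le> norm x * (?c * norm (A *v x))"
    by (rule mult_left_mono[OF norm_transpose_matrix_vector_le norm_ge_zero])
  finally show ?thesis
    using spec_norm_nonneg[of "A ** transpose A"]
    by (cases "A *v x = 0") (auto simp: power2_eq_square algebra_simps)
qed

lemma wnorm_gram_shift_matrix_vector_le:
  fixes B :: "real^'n^'m"
  assumes "0 \<le> lam"
    and "\<And>x. norm (B *v x) \<le> c * norm x" and "\<And>y. norm (transpose B *v y) \<le> c * norm y"
  shows "wnorm (B ** transpose B + lam *\<^sub>R mat 1) (B *v x)
           \<le> c * wnorm (transpose B ** B + lam *\<^sub>R mat 1) x"
proof -
  have c: "0 \<le> c"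
    using assms(2)[of "axis undefined 1"] by (metis norm_axis_1 norm_ge_zero order_trans mult_1_right)
  have Bx: "(norm (B *v x))\<^sup>2 \<le> c\<^sup>2 * (norm x)\<^sup>2"
    using power_mono[OF assms(2)[of x]] by (simp add: power_mult_distrib)
  have BtBx: "(norm (transpose B *v (B *v x)))\<^sup>2 \<le> c\<^sup>2 * (norm (B *v x))\<^sup>2"
    using power_mono[OF assms(3)[of "B *v x"]] by (simp add: power_mult_distrib)
  have "wnorm (B ** transpose B + lam *\<^sub>R mat 1) (B *v x)
          = sqrt ((norm (transpose B *v (B *v x)))\<^sup>2 + lam * (norm (B *v x))\<^sup>2)"
    using wnorm_gram_shift[where B="transpose B"] by simp
  also have "\<dots> \<le> sqrt (c\<^sup>2 * ((norm (B *v x))\<^sup>2 + lam * (norm x)\<^sup>2))"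
    using BtBx mult_left_mono[OF Bx assms(1)]
    by (intro real_sqrt_le_mono) (simp add: algebra_simps)
  also have "\<dots> = c * wnorm (transpose B ** B + lam *\<^sub>R mat 1) x"
    using c by (simp add: wnorm_gram_shift real_sqrt_mult)
  finally show ?thesis .
qed

lemma wnorm_gram_square_shift:
  fixes A :: "real^'n^'m"
  shows "wnorm ((transpose A ** A) ** (transpose A ** A) + lam *\<^sub>R (transpose A ** A)) x
           = wnorm (A ** transpose A + lam *\<^sub>R mat 1) (A *v x)"
proof -
  have "x \<bullet> (transpose A *v (A *v (transpose A *v (A *v x))))
          = (A *v (transpose A *v (A *v x))) \<bullet> (A *v x)"
    by (metis inner_commute inner_matrix_vector_transpose)
  also have "\<dots> = (norm (transpose A *v (A *v x)))\<^sup>2"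
    by (simp only: inner_matrix_vector_transpose power2_norm_eq_inner)
  finally have "x \<bullet> (((transpose A ** A) ** (transpose A ** A) + lam *\<^sub>R (transpose A ** A)) *v x)
               = (norm (transpose A *v (A *v x)))\<^sup>2 + lam * (norm (A *v x))\<^sup>2"
    by (simp add: matrix_vector_mult_add_rdistrib scaleR_matrix_vector_assoc[symmetric]
        matrix_vector_mul_assoc[symmetric] inner_add_right inner_gram[symmetric])
  then show ?thesis
    using wnorm_gram_shift[where B="transpose A"] by (simp add: wnorm_def)
qed

lemma matrix_vector_gram_shift_commute:
  fixes A :: "real^'n^'m"
  shows "A *v ((transpose A ** A + lam *\<^sub>R mat 1) *v x)
           = (A ** transpose A + lam *\<^sub>R mat 1) *v (A *v x)"
  by (simp add: matrix_vector_mult_shift matrix_vector_mul_assoc[symmetric]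
      matrix_vector_right_distrib matrix_vector_mult_scaleR)

lemma invertible_if_inner_eq_0_imp:
  fixes B :: "real^'n^'n"
  assumes "\<And>x. x \<bullet> (B *v x) = 0 \<Longrightarrow> x = 0"
  shows "invertible B"
  using assms by (simp add: invertible_left_inverse matrix_left_invertible_ker)

lemma invertible_matrix_inv_mult_vec:
  fixes B :: "real^'n^'n"
  assumes "invertible B"
  shows "B *v (matrix_inv B *v r) = r"
proof -
  have "B ** matrix_inv B = mat 1"
    using assms unfolding invertible_def matrix_inv_def by (rule someI2_ex) blast
  then show ?thesis by (simp add: matrix_vector_mul_assoc)
qed

lemma invertible_gram:
  fixes A :: "real^'n^'m"
  assumes "rank A = CARD('n)"
  shows "invertible (transpose A ** A)"
proof (rule invertible_if_inner_eq_0_imp)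
  fix x assume "x \<bullet> ((transpose A ** A) *v x) = 0"
  then have "A *v x = 0" by (simp add: inner_gram)
  with assms show "x = 0"
    by (metis full_rank_injective injD matrix_vector_mult_0_right)
qed

lemma invertible_gram_shift:
  fixes A :: "real^'n^'m"
  assumes "0 < lam"
  shows "invertible (transpose A ** A + lam *\<^sub>R mat 1)"
proof (rule invertible_if_inner_eq_0_imp)
  fix x assume "x \<bullet> ((transpose A ** A + lam *\<^sub>R mat 1) *v x) = 0"
  then have "(norm (A *v x))\<^sup>2 + lam * (norm x)\<^sup>2 = 0" by (simp add: inner_gram_shift)
  with assms show "x = 0"
    by (simp add: add_nonneg_eq_0_iff)
qed

lemma shifted_solutions_difference:
  fixes W :: "real^'n^'n"
  assumes "lam \<noteq> 0" and "W *v u = r" and "(W + lam *\<^sub>R mat 1) *v v = r"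
  shows "(W + lam *\<^sub>R mat 1) *v ((1 / lam) *\<^sub>R (u - v)) = u"
    and "v = W *v ((1 / lam) *\<^sub>R (u - v))"
proof -
  have "W *v v + lam *\<^sub>R v = r"
    using assms(3) by (simp only: matrix_vector_mult_shift)
  then have "W *v u - W *v v = lam *\<^sub>R v"
    using assms(2) by (simp add: algebra_simps)
  then have Wz: "W *v ((1 / lam) *\<^sub>R (u - v)) = v"
    using assms(1) by (simp add: matrix_vector_mult_scaleR matrix_vector_right_distrib[symmetric]
        algebra_simps)
  then show "v = W *v ((1 / lam) *\<^sub>R (u - v))" ..
  show "(W + lam *\<^sub>R mat 1) *v ((1 / lam) *\<^sub>R (u - v)) = u"
    using assms(1) by (simp add: matrix_vector_mult_shift Wz)
qed

text \<open>The premise \<open>b = 0 \<Longrightarrow> d = 0\<close> is only needed for \<open>e < 0\<close>, where it forces \<open>a = b = 0\<close>.\<close>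

lemma relative_error_chain:
  fixes a b c d e :: real
  assumes "0 \<le> a" "0 \<le> b" "0 \<le> c" "a \<le> e * b" "b \<le> c * d" "b = 0 \<Longrightarrow> d = 0"
  shows "c * a \<le> e * c\<^sup>2 * d"
proof (cases "0 \<le> e")
  case True
  then have "a \<le> e * (c * d)" using assms by (metis mult_left_mono order_trans)
  then have "c * a \<le> c * (e * (c * d))" using assms(3) by (rule mult_left_mono)
  then show ?thesis by (simp add: power2_eq_square mult_ac)
next
  case False
  then have "b = 0" using assms mult_neg_pos[of e b] by linarith
  then show ?thesis using assms by simp
qed

lemma wnorm_gram_error_transfer:
  fixes A :: "real^'n^'m" and lam :: real
  defines "P \<equiv> A ** transpose A + lam *\<^sub>R mat 1"
  assumes "0 \<le> lam" and "(transpose A ** A + lam *\<^sub>R mat 1) *v z = u"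
    and "wnorm (transpose A ** A) (u' - u) \<le> e * wnorm (transpose A ** A) u"
  shows "wnorm P (A *v (u' - u)) \<le> e * spec_norm P * wnorm P (A *v z)"
proof -
  have P: "psd P"
    using psd_gram_shift[OF assms(2), of "transpose A"] by (simp add: P_def)
  have Au: "A *v u = P *v (A *v z)"
    using matrix_vector_gram_shift_commute assms(3) by (metis P_def)
  have "sqrt (spec_norm P) * wnorm (transpose A ** A) (u' - u)
          \<le> e * (sqrt (spec_norm P))\<^sup>2 * wnorm P (A *v z)"
  proof (rule relative_error_chain)
    show "wnorm (transpose A ** A) u \<le> sqrt (spec_norm P) * wnorm P (A *v z)"
      using psd_norm_matrix_vector_le[OF P] by (simp add: wnorm_gram Au)
    show "wnorm P (A *v z) = 0" if "wnorm (transpose A ** A) u = 0"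
    proof -
      from that have "P *v (A *v z) = 0" by (simp add: wnorm_gram Au[symmetric])
      then show ?thesis by (simp add: wnorm_def)
    qed
  qed (use assms(4) spec_norm_nonneg in \<open>simp_all add: wnorm_gram\<close>)
  moreover have "wnorm P (A *v (u' - u)) \<le> sqrt (spec_norm P) * wnorm (transpose A ** A) (u' - u)"
    by (simp add: wnorm_gram wnorm_le_spec_norm)
  ultimately show ?thesis
    using spec_norm_nonneg[of P] by simp
qed

lemma wnorm_gram_shift_error_transfer:
  fixes A :: "real^'n^'m" and lam :: real
  defines "P \<equiv> A ** transpose A + lam *\<^sub>R mat 1"
    and "M \<equiv> transpose A ** A + lam *\<^sub>R mat 1"
  assumes "0 < lam" and "v = transpose A *v (A *v z)"
    and "wnorm M (v' - v) \<le> e * wnorm M v"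
  shows "wnorm P (A *v (v' - v)) \<le> e * spec_norm (A ** transpose A) * wnorm P (A *v z)"
proof -
  let ?c = "sqrt (spec_norm (A ** transpose A))"
  have A: "norm (A *v x) \<le> ?c * norm x" for x
    by (rule norm_matrix_vector_le_sqrt_spec_norm)
  have At: "norm (transpose A *v y) \<le> ?c * norm y" for y
    by (rule norm_transpose_matrix_vector_le)
  have "?c * wnorm M (v' - v) \<le> e * ?c\<^sup>2 * wnorm P (A *v z)"
  proof (rule relative_error_chain)
    show "wnorm M v \<le> ?c * wnorm P (A *v z)"
      using wnorm_gram_shift_matrix_vector_le[of lam "transpose A" ?c "A *v z"] assms(3) A At
      by (simp add: M_def P_def assms(4))
    show "wnorm P (A *v z) = 0" if "wnorm M v = 0"
    proof -
      have "v = 0"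
        using that assms(3) by (simp add: M_def wnorm_gram_shift add_nonneg_eq_0_iff)
      then have "A *v z = 0"
        using inner_gram[where B=A and x=z] by (simp add: assms(4) matrix_vector_mul_assoc)
      then show ?thesis by (simp add: wnorm_def)
    qed
  qed (use assms(3,5) spec_norm_nonneg in \<open>simp_all add: M_def wnorm_def inner_gram_shift\<close>)
  moreover have "wnorm P (A *v (v' - v)) \<le> ?c * wnorm M (v' - v)"
    using wnorm_gram_shift_matrix_vector_le[of lam A ?c] assms(3) A At
    by (simp add: M_def P_def)
  ultimately show ?thesis
    using spec_norm_nonneg[of "A ** transpose A"] by simp
qed

theorem mainTheorem13:
  fixes A :: "real^'s^'m" and lam eps21 eps22 :: real
    and r uhat vhat :: "real^'s"
  assumes "rank A = CARD('s)"
    and "lam > 0"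
  defines "W \<equiv> transpose A ** A"
  defines "ustar \<equiv> matrix_inv W *v r"
    and "vstar \<equiv> matrix_inv (W + lam *\<^sub>R mat 1) *v r"
  defines "zstar \<equiv> (1 / lam) *\<^sub>R (ustar - vstar)"
  assumes "wnorm W (uhat - ustar) \<le> eps21 * wnorm W ustar"
    and "wnorm (W + lam *\<^sub>R mat 1) (vhat - vstar)
           \<le> eps22 * wnorm (W + lam *\<^sub>R mat 1) vstar"
  defines "zhat \<equiv> (1 / lam) *\<^sub>R (uhat - vhat)"
  shows "wnorm (W ** W + lam *\<^sub>R W) (zhat - zstar)
         \<le> (1 / lam) * (eps21 * spec_norm (A ** transpose A + lam *\<^sub>R mat 1)
                         + eps22 * spec_norm (A ** transpose A))
             * wnorm (W ** W + lam *\<^sub>R W) zstar"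
proof -
  define P where "P = A ** transpose A + lam *\<^sub>R mat 1"
  have Wu: "W *v ustar = r"
    using invertible_gram[OF assms(1)] by (simp add: ustar_def W_def invertible_matrix_inv_mult_vec)
  have Mv: "(W + lam *\<^sub>R mat 1) *v vstar = r"
    using invertible_gram_shift[OF assms(2), of A]
    by (simp add: vstar_def W_def invertible_matrix_inv_mult_vec)
  have Mz: "(W + lam *\<^sub>R mat 1) *v zstar = ustar" and vz: "vstar = W *v zstar"
    using shifted_solutions_difference[OF _ Wu Mv] assms(2) unfolding zstar_def by auto
  have eu: "wnorm P (A *v (uhat - ustar)) \<le> eps21 * spec_norm P * wnorm P (A *v zstar)"
    using wnorm_gram_error_transfer[of lam A zstar ustar uhat eps21] assms(2,7) Mz
    by (simp add: P_def W_def)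
  have ev: "wnorm P (A *v (vhat - vstar))
              \<le> eps22 * spec_norm (A ** transpose A) * wnorm P (A *v zstar)"
    using wnorm_gram_shift_error_transfer[of lam vstar A zstar vhat eps22] assms(2,8) vz
    by (simp add: P_def W_def matrix_vector_mul_assoc)
  have "A *v (zhat - zstar) = (1 / lam) *\<^sub>R (A *v (uhat - ustar) - A *v (vhat - vstar))"
    by (simp add: zhat_def zstar_def matrix_vector_mult_scaleR matrix_vector_right_distrib
        matrix_vector_mult_diff_distrib algebra_simps)
  then have "wnorm (W ** W + lam *\<^sub>R W) (zhat - zstar)
               = (1 / lam) * wnorm P (A *v (uhat - ustar) - A *v (vhat - vstar))"
    using assms(2) by (simp add: W_def P_def wnorm_gram_square_shift wnorm_scaleR)
  also have "\<dots> \<le> (1 / lam) * (wnorm P (A *v (uhat - ustar)) + wnorm P (A *v (vhat - vstar)))"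
    using assms(2) psd_gram_shift[of lam "transpose A"]
    by (intro mult_left_mono wnorm_diff_le) (simp_all add: P_def)
  also have "\<dots> \<le> (1 / lam) * (eps21 * spec_norm P * wnorm P (A *v zstar)
                      + eps22 * spec_norm (A ** transpose A) * wnorm P (A *v zstar))"
    using eu ev assms(2) by (intro mult_left_mono add_mono) simp_all
  also have "\<dots> = (1 / lam) * (eps21 * spec_norm P + eps22 * spec_norm (A ** transpose A))
                      * wnorm P (A *v zstar)"
    by (simp add: algebra_simps)
  finally show ?thesis
    by (simp add: P_def W_def wnorm_gram_square_shift)
qed

end
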